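(* Let $X\subseteq\mathbb{Z}_6^2$ and suppose there are distinct $a,b,c\in\mathbb{Z}_6$ such that $X$ contains at least $3$ elements with first coordinate $a$, at least $3$ elements with first coordinate $b$, and at least $4$ elements with first coordinate $c$. Then there exists $S\subseteq X$ with $|S|=6$ and $\sum_{s\in S}s=(0,0)$. *)

theory Defs
  imports Main "HOL-Library.Numeral_Type" "HOL-Library.Product_Plus"
begin

end

theory Submission
  imports Defs
begin

text \<open>Pick weights \<open>i, j, k \<in> {1, 2, 3}\<close> with \<open>i + j + k = 6\<close> and \<open>i a + j b + k c = 0\<close> in
  \<open>\<int>\<^sub>6\<close> (a finite check on \<open>a - c\<close> and \<open>b - c\<close>), with \<open>i \<le> 2\<close> after possibly swapping
  \<open>a\<close> and \<open>b\<close>. Any \<open>j\<close> points of column \<open>b\<close> have some second-coordinate sum \<open>s\<close>. The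
  \<open>i\<close>-subsets of column \<open>a\<close> realise at least 3 distinct second-coordinate sums and the
  \<open>k\<close>-subsets of column \<open>c\<close> at least 4; as \<open>3 + 4 > 6\<close>, two of these sums add up to \<open>-s\<close>,
  and the six chosen points sum to \<open>(0, 0)\<close>.\<close>

definition subset_sums :: "'a::comm_monoid_add set \<Rightarrow> nat \<Rightarrow> 'a set" where
  "subset_sums V n = {\<Sum>T | T. T \<subseteq> V \<and> finite T \<and> card T = n}"

lemma subset_sumsI: "T \<subseteq> V \<Longrightarrow> finite T \<Longrightarrow> card T = n \<Longrightarrow> \<Sum>T \<in> subset_sums V n"
  unfolding subset_sums_def by blast

lemma subset_sums_mono: "U \<subseteq> V \<Longrightarrow> subset_sums U n \<subseteq> subset_sums V n"
  unfolding subset_sums_def by blast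

lemma finite_subset_sums: "finite V \<Longrightarrow> finite (subset_sums V n)"
proof -
  assume "finite V"
  moreover have "subset_sums V n \<subseteq> sum id ` Pow V"
    unfolding subset_sums_def by auto
  ultimately show ?thesis
    by (meson finite_Pow_iff finite_imageI finite_subset)
qed

lemma subset_sums_nonempty: "n \<le> card V \<Longrightarrow> subset_sums V n \<noteq> {}"
  by (metis empty_iff obtain_subset_with_card_n subset_sumsI)

lemma subset_sums_one: "subset_sums V 1 = V"
proof (intro equalityI subsetI)
  fix x assume "x \<in> V"
  then show "x \<in> subset_sums V 1"
    using subset_sumsI[of "{x}" V 1] by simp
qed (auto simp: subset_sums_def card_1_singleton_iff)

lemma subset_sums_complement:
  fixes V :: "'a::ab_group_add set"
  assumes "finite V" "n \<le> card V"
  shows "subset_sums V (card V - n) = (\<lambda>s. \<Sum>V - s) ` subset_sums V n"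
proof (intro equalityI subsetI)
  fix s assume "s \<in> subset_sums V (card V - n)"
  then obtain T where T: "T \<subseteq> V" "card T = card V - n" "s = \<Sum>T"
    unfolding subset_sums_def by blast
  have "card (V - T) = n"
    using T assms by (simp add: card_Diff_subset finite_subset)
  moreover have "s = \<Sum>V - \<Sum>(V - T)"
    using T assms by (simp add: sum_diff)
  ultimately show "s \<in> (\<lambda>s. \<Sum>V - s) ` subset_sums V n"
    using assms(1) by (blast intro: subset_sumsI)
next
  fix s assume "s \<in> (\<lambda>s. \<Sum>V - s) ` subset_sums V n"
  then obtain T where T: "T \<subseteq> V" "card T = n" "s = \<Sum>V - \<Sum>T"
    unfolding subset_sums_def by blast
  have "card (V - T) = card V - n"
    using T assms by (simp add: card_Diff_subset finite_subset)
  moreover have "s = \<Sum>(V - T)"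
    using T assms by (simp add: sum_diff)
  ultimately show "s \<in> subset_sums V (card V - n)"
    using assms(1) by (blast intro: subset_sumsI)
qed

lemma card_subset_sums_complement:
  fixes V :: "'a::ab_group_add set"
  assumes "finite V" "n \<le> card V"
  shows "card (subset_sums V (card V - n)) = card (subset_sums V n)"
  unfolding subset_sums_complement[OF assms] by (rule card_image) (simp add: inj_on_def)

lemma card_subset_sums_ge:
  fixes V :: "'a::ab_group_add set"
  assumes "finite V" "m \<le> card V" "n = 1 \<or> n = m - 1"
  shows "m \<le> card (subset_sums V n)"
proof (cases "m = 0")
  case False
  obtain U where U: "U \<subseteq> V" "card U = m" "finite U"
    using obtain_subset_with_card_n[OF assms(2)] by blast
  have "card (subset_sums U 1) = m"
    using U(2) unfolding subset_sums_one .
  moreover have "card (subset_sums U (m - 1)) = card (subset_sums U 1)"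
    using card_subset_sums_complement[OF U(3), of 1] U(2) False by simp
  ultimately have "card (subset_sums U n) = m"
    using assms(3) by auto
  moreover have "subset_sums U n \<subseteq> subset_sums V n"
    using U(1) by (rule subset_sums_mono)
  ultimately show ?thesis
    using finite_subset_sums[OF assms(1)] by (metis card_mono)
qed simp

lemma exists_add_eq_of_card_gt:
  fixes P Q :: "'a::{finite, group_add} set"
  assumes "CARD('a) < card P + card Q"
  shows "\<exists>p\<in>P. \<exists>q\<in>Q. p + q = t"
proof (rule ccontr)
  assume "\<not> ?thesis"
  then have disjoint: "P \<inter> (\<lambda>q. t - q) ` Q = {}"
    by auto (metis diff_add_cancel)
  have "card ((\<lambda>q. t - q) ` Q) = card Q"
    by (intro card_image inj_onI) (metis add_left_cancel diff_conv_add_uminus neg_equal_iff_equal)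
  then have "card (P \<union> (\<lambda>q. t - q) ` Q) = card P + card Q"
    using card_Un_disjoint[OF _ _ disjoint] by simp
  moreover have "card (P \<union> (\<lambda>q. t - q) ` Q) \<le> CARD('a)"
    by (rule card_mono) auto
  ultimately show False
    using assms by simp
qed

definition column :: "('a \<times> 'b) set \<Rightarrow> 'a \<Rightarrow> 'b set" where
  "column X a = {y. (a, y) \<in> X}"

lemma card_column: "card {x \<in> X. fst x = a} = card (column X a)"
proof -
  have "{x \<in> X. fst x = a} = Pair a ` column X a"
    unfolding column_def by force
  then show ?thesis
    by (simp add: card_image inj_on_def)
qed

lemma sum_Pair_image:
  "(\<Sum>s \<in> Pair a ` T. s) = (of_nat (card T) * (a::'a::semiring_1), \<Sum>T)"
proof -
  have "(\<Sum>s \<in> Pair a ` T. s) = (\<Sum>y\<in>T. (a, y))"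
    by (simp add: sum.reindex inj_on_def)
  also have "\<dots> = (of_nat (card T) * a, \<Sum>T)"
    by (simp add: fst_sum snd_sum prod_eqI)
  finally show ?thesis .
qed

lemma zero_sum_subset_of_column_sums:
  fixes X :: "('a::semiring_1 \<times> 'b::comm_monoid_add) set"
  assumes "distinct [a, b, c]"
    and "s\<^sub>a \<in> subset_sums (column X a) i"
    and "s\<^sub>b \<in> subset_sums (column X b) j"
    and "s\<^sub>c \<in> subset_sums (column X c) k"
    and "of_nat i * a + of_nat j * b + of_nat k * c = 0"
    and "s\<^sub>a + s\<^sub>b + s\<^sub>c = 0"
  shows "\<exists>S \<subseteq> X. card S = i + j + k \<and> \<Sum>S = (0, 0)"
proof -
  obtain A B C where
    A: "A \<subseteq> column X a" "finite A" "card A = i" "s\<^sub>a = \<Sum>A" and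
    B: "B \<subseteq> column X b" "finite B" "card B = j" "s\<^sub>b = \<Sum>B" and
    C: "C \<subseteq> column X c" "finite C" "card C = k" "s\<^sub>c = \<Sum>C"
    using assms(2-4) unfolding subset_sums_def by blast
  define S where "S = Pair a ` A \<union> Pair b ` B \<union> Pair c ` C"
  have disjoint: "Pair a ` A \<inter> Pair b ` B = {}" "(Pair a ` A \<union> Pair b ` B) \<inter> Pair c ` C = {}"
    using assms(1) by auto
  have "S \<subseteq> X"
    using A(1) B(1) C(1) unfolding S_def column_def by blast
  moreover have "card S = i + j + k"
    using A B C disjoint unfolding S_def
    by (simp add: card_Un_disjoint card_image inj_on_def)
  moreover have "\<Sum>S = (of_nat i * a + of_nat j * b + of_nat k * c, s\<^sub>a + s\<^sub>b + s\<^sub>c)"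
    using A B C disjoint unfolding S_def
    by (simp add: sum.union_disjoint sum_Pair_image)
  ultimately show ?thesis
    using assms(5,6) by auto
qed

lemma UNIV_6: "(UNIV :: 6 set) = {0, 1, 2, 3, 4, 5}"
proof -
  have "card ({0, 1, 2, 3, 4, 5} :: 6 set) = CARD(6)"
    by simp
  then show ?thesis
    by (metis card_subset_eq finite_class.finite_UNIV subset_UNIV)
qed

lemma Z6_exhaust: "(x::6) = 0 \<or> x = 1 \<or> x = 2 \<or> x = 3 \<or> x = 4 \<or> x = 5"
  using UNIV_6 by auto

lemma double_eq_double_of_sum_swaps:
  fixes p q r s :: "'a::ab_group_add"
  assumes "p + s = r + q" "q + s = r + p"
  shows "p + p = q + q"
proof -
  have "p - q = r - s" "q - p = r - s"
    using assms by (simp_all add: algebra_simps)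
  then show ?thesis
    by (metis diff_add_cancel diff_add_eq)
qed

lemma double_eq_double_Z6: "x + x = y + (y::6) \<Longrightarrow> x = y \<or> x = y + 3"
  using Z6_exhaust[of x] Z6_exhaust[of y] by (elim disjE) simp_all

lemma card_subset_sums_two_Z6:
  fixes V :: "6 set"
  assumes "4 \<le> card V"
  shows "4 \<le> card (subset_sums V 2)"
proof -
  obtain U where U: "U \<subseteq> V" "card U = 4"
    using obtain_subset_with_card_n[OF assms] by blast
  then obtain w\<^sub>1 w\<^sub>2 w\<^sub>3 w\<^sub>4 where U_eq: "U = {w\<^sub>1, w\<^sub>2, w\<^sub>3, w\<^sub>4}"
    and distinct: "distinct [w\<^sub>1, w\<^sub>2, w\<^sub>3, w\<^sub>4]"
    by (auto simp: card_Suc_eq numeral_eq_Suc)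
  have pair_sum: "x + y \<in> subset_sums V 2" if "x \<in> U" "y \<in> U" "x \<noteq> y" for x y
    using subset_sumsI[of "{x, y}" V 2] that U(1) by auto
  have "\<exists>v \<in> {w\<^sub>2 + w\<^sub>3, w\<^sub>2 + w\<^sub>4, w\<^sub>3 + w\<^sub>4}. v \<notin> {w\<^sub>1 + w\<^sub>2, w\<^sub>1 + w\<^sub>3, w\<^sub>1 + w\<^sub>4}"
  proof (rule ccontr)
    \<comment> \<open>Otherwise \<open>2 w\<^sub>2 = 2 w\<^sub>3 = 2 w\<^sub>4\<close>, i.e. three distinct elements in one coset of \<open>{0, 3}\<close>.\<close>
    assume "\<not> ?thesis"
    then have swaps: "w\<^sub>2 + w\<^sub>3 = w\<^sub>1 + w\<^sub>4" "w\<^sub>2 + w\<^sub>4 = w\<^sub>1 + w\<^sub>3" "w\<^sub>4 + w\<^sub>3 = w\<^sub>1 + w\<^sub>2"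
      using distinct by (auto simp: add.commute)
    have "w\<^sub>2 + w\<^sub>2 = w\<^sub>3 + w\<^sub>3"
      by (rule double_eq_double_of_sum_swaps[OF swaps(2)]) (metis swaps(3) add.commute)
    moreover have "w\<^sub>2 + w\<^sub>2 = w\<^sub>4 + w\<^sub>4"
      by (rule double_eq_double_of_sum_swaps[OF swaps(1,3)])
    ultimately have "w\<^sub>3 = w\<^sub>2 + 3" "w\<^sub>4 = w\<^sub>2 + 3"
      using distinct double_eq_double_Z6 by (metis distinct_length_2_or_more)+
    then show False
      using distinct by simp
  qed
  then obtain v where v: "v \<in> {w\<^sub>2 + w\<^sub>3, w\<^sub>2 + w\<^sub>4, w\<^sub>3 + w\<^sub>4}" "v \<notin> {w\<^sub>1 + w\<^sub>2, w\<^sub>1 + w\<^sub>3, w\<^sub>1 + w\<^sub>4}"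
    by blast
  have "insert v {w\<^sub>1 + w\<^sub>2, w\<^sub>1 + w\<^sub>3, w\<^sub>1 + w\<^sub>4} \<subseteq> subset_sums V 2"
    using v(1) distinct by (auto simp: U_eq intro!: pair_sum)
  moreover have "card (insert v {w\<^sub>1 + w\<^sub>2, w\<^sub>1 + w\<^sub>3, w\<^sub>1 + w\<^sub>4}) = 4"
    using v(2) distinct by auto
  ultimately show ?thesis
    by (metis card_mono finite_class.finite_UNIV finite_subset subset_UNIV)
qed

lemma two_term_relation_Z6:
  fixes d e :: 6
  assumes "d \<noteq> 0" "e \<noteq> 0" "d \<noteq> e"
  obtains i j :: nat where "i \<in> {1, 2, 3}" "j \<in> {1, 2, 3}" "3 \<le> i + j" "i + j \<le> 5"
    "of_nat i * d + of_nat j * e = 0"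
proof -
  have "2 * d + 2 * e = 0 \<or> 3 * d + e = 0 \<or> d + 3 * e = 0 \<or> 2 * d + e = 0 \<or> d + 2 * e = 0
      \<or> 3 * d + 2 * e = 0 \<or> 2 * d + 3 * e = 0"
    using Z6_exhaust[of d] Z6_exhaust[of e] assms by (elim disjE) simp_all
  then show ?thesis
    using that[of 2 2] that[of 3 1] that[of 1 3] that[of 2 1] that[of 1 2] that[of 3 2] that[of 2 3]
    by auto
qed

lemma column_weights_Z6:
  fixes a b c :: 6
  assumes "distinct [a, b, c]"
  obtains i j k :: nat where "i \<in> {1, 2, 3}" "j \<in> {1, 2, 3}" "k \<in> {1, 2, 3}" "i + j + k = 6"
    "of_nat i * a + of_nat j * b + of_nat k * c = 0"
proof -
  obtain i j where ij: "i \<in> {1, 2, 3}" "j \<in> {1, 2, 3}" "3 \<le> i + j" "i + j \<le> 5"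
    and relation: "of_nat i * (a - c) + of_nat j * (b - c) = 0"
    using two_term_relation_Z6[of "a - c" "b - c"] assms by auto
  define k where "k = 6 - (i + j)"
  have sum_ijk: "i + j + k = 6"
    using ij by (simp add: k_def)
  have six_eq_zero: "of_nat (i + j + k) = (0::6)"
    using sum_ijk by simp
  have "of_nat i * a + of_nat j * b + of_nat k * c
      = of_nat i * (a - c) + of_nat j * (b - c) + of_nat (i + j + k) * c"
    by (simp add: algebra_simps)
  also have "\<dots> = 0"
    by (simp only: relation six_eq_zero mult_zero_left add_0_right)
  finally show ?thesis
    using that[of i j k] ij sum_ijk by (auto simp: k_def)
qed

lemma zero_sum_subset_of_three_columns_Z6:
  fixes X :: "(6 \<times> 6) set"
  assumes "distinct [a, b, c]"
    and "i \<in> {1, 2}" "k \<in> {1, 2, 3}" "i + j + k = 6"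
    and "of_nat i * a + of_nat j * b + of_nat k * c = 0"
    and "3 \<le> card (column X a)" "j \<le> card (column X b)" "4 \<le> card (column X c)"
  shows "\<exists>S \<subseteq> X. card S = 6 \<and> \<Sum>S = (0, 0)"
proof -
  obtain s\<^sub>b where s\<^sub>b: "s\<^sub>b \<in> subset_sums (column X b) j"
    using subset_sums_nonempty[OF assms(7)] by blast
  have "3 \<le> card (subset_sums (column X a) i)"
    using card_subset_sums_ge[of "column X a" 3 i] assms(2,6) by auto
  moreover have "4 \<le> card (subset_sums (column X c) k)"
    using card_subset_sums_ge[of "column X c" 4 k] card_subset_sums_two_Z6 assms(3,8) by auto
  ultimately obtain s\<^sub>a s\<^sub>c where
    "s\<^sub>a \<in> subset_sums (column X a) i" "s\<^sub>c \<in> subset_sums (column X c) k" "s\<^sub>a + s\<^sub>c = - s\<^sub>b"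
    using exists_add_eq_of_card_gt[of "subset_sums (column X a) i" "subset_sums (column X c) k"]
    by fastforce
  moreover have "s\<^sub>a + s\<^sub>b + s\<^sub>c = 0"
    using calculation(3) by (metis add.commute add.left_commute eq_neg_iff_add_eq_0)
  ultimately show ?thesis
    using zero_sum_subset_of_column_sums[OF assms(1) _ s\<^sub>b _ assms(5)] assms(4) by metis
qed

theorem mainTheorem13:
  fixes X :: "(6 \<times> 6) set" and a b c :: 6
  assumes "a \<noteq> b" "a \<noteq> c" "b \<noteq> c"
    and "card {x \<in> X. fst x = a} \<ge> 3"
    and "card {x \<in> X. fst x = b} \<ge> 3"
    and "card {x \<in> X. fst x = c} \<ge> 4"
  shows "\<exists>S \<subseteq> X. card S = 6 \<and> (\<Sum>s\<in>S. s) = (0, 0)"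
proof -
  have columns: "3 \<le> card (column X a)" "3 \<le> card (column X b)" "4 \<le> card (column X c)"
    using assms(4-6) by (simp_all add: card_column)
  obtain i j k where ijk: "i \<in> {1, 2, 3}" "j \<in> {1, 2, 3}" "k \<in> {1, 2, 3}" "i + j + k = 6"
    and weights: "of_nat i * a + of_nat j * b + of_nat k * c = 0"
    using column_weights_Z6[of a b c] assms(1-3) by auto
  show ?thesis
  proof (cases "i = 3")
    case False
    then show ?thesis
      using zero_sum_subset_of_three_columns_Z6[of a b c i k j] ijk weights columns assms(1-3)
      by auto
  next
    case True
    then have "j \<in> {1, 2}" "j + i + k = 6" "of_nat j * b + of_nat i * a + of_nat k * c = 0"
      using ijk weights by (auto simp: add.commute)
    then show ?thesis
      using zero_sum_subset_of_three_columns_Z6[of b a c j k i] ijk columns assms(1-3)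
      by auto
  qed
qed

end
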